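(* Consider any instance $\mathcal{I}$ of the online volunteer notification problem (defined in the context) whose inter-activity time distribution $g$ has minimum discrete hazard rate $q$. Then the sparse notification (SN) policy is $\frac{1}{2-q}\left(1-\frac{1}{e}\right)$-competitive, i.e., for every such instance, $\mathbf{POL}_{\mathcal{I}} \ge \frac{1}{2-q}\left(1-\frac{1}{e}\right)\mathbf{LP}_{\mathcal{I}}$, where $\mathbf{POL}_{\mathcal{I}}$ is the expected number of tasks completed by the SN policy.
   Context: Online volunteer notification problem. An instance $\mathcal{I}$ consists of volunteers $[V]=\{1,\dots,V\}$, task types $[S]$, a horizon $T\in\mathbb{N}$, arrival probabilities $\lambda_{s,t}\ge 0$ ($s\in[S],t\in[T]$) with $\sum_{s=1}^S\lambda_{s,t}\le 1$, match probabilities $p_{v,s}\in[0,1]$, and a probability mass function $g$ on the positive integers (inter-activity time distribution) with CDF $G(\tau)=\sum_{i=1}^{\tau}g(i)$, $G(0)=0$. In each period $t$ at most one task arrives: of type $s$ with probability $\lambda_{s,t}$, and none with probability $\lambda_{0,t}:=1-\sum_{s}\lambda_{s,t}$, independently across periods. Each volunteer is at each time active or inactive; all are initially active. When a task arrives, the platform immediately and irrevocably notifies a subset of volunteers. Each notified active volunteer $v$ responds positively to a type-$s$ task independently with probability $p_{v,s}$; the task is completed iff at least one notified active volunteer responds. An active volunteer who is notified at time $t$ becomes inactive (regardless of her response) and becomes active again at time $t+Z$, where $Z$ is drawn independently with $\Pr(Z=\tau)=g(\tau)$; inactive volunteers ignore notifications and are unaffected by them. The platform knows $\lambda,p,g$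 but does not observe volunteers' states; an online policy decides whom to notify using only information available up to the current period. $\mathbf{POL}_{\mathcal{I}}$ denotes the expected number of completed tasks. Minimum discrete hazard rate (MDHR): $q=\min_{\tau\in\mathbb{N}}\frac{g(\tau)}{1-G(\tau-1)}$, with $\frac00:=1$. Benchmark: $\mathcal{P}$ is the set of $\mathbf{x}\in\mathbb{R}^{V\times S\times T}$ with $0\le x_{v,s,t}\le 1$ for all $v,s,t$ and $\sum_{\tau=1}^t\sum_{s=1}^S\lambda_{s,\tau}x_{v,s,\tau}(1-G(t-\tau))\le 1$ for all $v,t$. $\mathbf{LP}_{\mathcal{I}}=\max_{\mathbf{x}\in\mathcal{P}}\sum_{t=1}^T\sum_{s=1}^S\lambda_{s,t}\min\{\sum_{v=1}^V x_{v,s,t}p_{v,s},1\}$. A policy is $c$-competitive if $\mathbf{POL}_{\mathcal{I}}\ge c\,\mathbf{LP}_{\mathcal{I}}$ for every instance. Ex ante solution: $f(\mathbf{x})=\sum_{t=1}^T\sum_{s=1}^S\lambda_{s,t}\big(1-\prod_{v=1}^V(1-x_{v,s,t}p_{v,s})\big)$. Let $\mathbf{x}^*_{LP}$ be an optimal solution of $\mathbf{LP}_{\mathcal{I}}$; $\mathbf{x}^*_{AA}$ the output of the procedure (for some $m\in\mathbb{N}$): $\mathbf{x}^0=\mathbf{0}$, for $i=1,\dots,m$: $\mathbf{y}^i\in\arg\max_{\mathbf{x}\in\mathcal{P}}\langle \mathbf{x},\nabla f(\mathbf{x}^{i-1})\rangle$, $\mathbf{x}^i=\mathbf{x}^{i-1}+\mathbf{y}^i/m$,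 output $\mathbf{x}^m$; and $\mathbf{x}^*_{SQ}$ obtained sequentially for $v=1,\dots,V$: $(x^{SQ}_{v,s,t})_{s,t}$ is an optimal solution of $\max\sum_{t,s}\lambda_{s,t}\big(\prod_{u<v}(1-p_{u,s}x^{SQ}_{u,s,t})\big)p_{v,s}x_{v,s,t}$ subject to $0\le x_{v,s,t}\le1$ and $\sum_{\tau=1}^t\sum_s\lambda_{s,\tau}x_{v,s,\tau}(1-G(t-\tau))\le1$ for all $t$. Then $\mathbf{x}^*\in\arg\max_{\mathbf{x}\in\{\mathbf{x}^*_{LP},\mathbf{x}^*_{AA},\mathbf{x}^*_{SQ}\}}f(\mathbf{x})$. SN policy: Offline, for $v=1,\dots,V$ in order: set $r_{v,s,t}=p_{v,s}\prod_{u=1}^{v-1}(1-\tilde x_{u,s,t}p_{u,s})$, $J_{v,T+1}=0$; for $t=T$ down to $1$: for $s\in[S]$, $\tilde x_{v,s,t}=x^*_{v,s,t}\,\mathbb{I}\{r_{v,s,t}+\sum_{\tau=t+1}^T g(\tau-t)J_{v,\tau}\ge J_{v,t+1}\}$ (with $\tilde x_{v,0,t}=r_{v,0,t}=0$), and $J_{v,t}=\sum_{s=0}^S\lambda_{s,t}\big((1-\tilde x_{v,s,t})J_{v,t+1}+\tilde x_{v,s,t}(r_{v,s,t}+\sum_{\tau=t+1}^T g(\tau-t)J_{v,\tau})\big)$. Online: when a task of type $s$ arrives at time $t$, notify each volunteer $v$ independently with probability $\tilde x_{v,s,t}$. *)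

theory Defs
  imports "HOL-Analysis.Analysis" "HOL-Probability.Probability"
begin

text \<open>Volunteers are 1..nV, task types 1..nS, periods 1..nT.
  lam s t = arrival probability of type s in period t; pm v s = match probability;
  gZ = distribution of the inter-activity time Z (a pmf on the positive integers).\<close>

record inst =
  nV :: nat
  nS :: nat
  nT :: nat
  lam :: "nat \<Rightarrow> nat \<Rightarrow> real"
  pm :: "nat \<Rightarrow> nat \<Rightarrow> real"
  gZ :: "nat pmf"

definition valid_inst :: "inst \<Rightarrow> bool" where
  "valid_inst I \<longleftrightarrow>
     (\<forall>s\<in>{1..nS I}. \<forall>t\<in>{1..nT I}. 0 \<le> lam I s t) \<and>
     (\<forall>t\<in>{1..nT I}. (\<Sum>s=1..nS I. lam I s t) \<le> 1) \<and>
     (\<forall>v\<in>{1..nV I}. \<forall>s\<in>{1..nS I}. 0 \<le> pm I v s \<and> pm I v s \<le> 1) \<and>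
     pmf (gZ I) 0 = 0"

definition lam0 :: "inst \<Rightarrow> nat \<Rightarrow> real" where
  "lam0 I t = 1 - (\<Sum>s=1..nS I. lam I s t)"

definition gg :: "inst \<Rightarrow> nat \<Rightarrow> real" where
  "gg I \<tau> = pmf (gZ I) \<tau>"

definition GG :: "inst \<Rightarrow> nat \<Rightarrow> real" where
  "GG I \<tau> = (\<Sum>i=1..\<tau>. gg I i)"

text \<open>discrete hazard rate with the convention 0/0 := 1\<close>
definition hazard :: "inst \<Rightarrow> nat \<Rightarrow> real" where
  "hazard I \<tau> = (if gg I \<tau> = 0 \<and> 1 - GG I (\<tau> - 1) = 0 then 1
                 else gg I \<tau> / (1 - GG I (\<tau> - 1)))"

definition is_mdhr :: "inst \<Rightarrow> real \<Rightarrow> bool" where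
  "is_mdhr I q \<longleftrightarrow> q \<in> hazard I ` {1..} \<and> (\<forall>\<tau>\<ge>1. q \<le> hazard I \<tau>)"

type_synonym sol = "nat \<Rightarrow> nat \<Rightarrow> nat \<Rightarrow> real"  \<comment> \<open>x v s t\<close>

definition inP :: "inst \<Rightarrow> sol \<Rightarrow> bool" where
  "inP I x \<longleftrightarrow>
     (\<forall>v\<in>{1..nV I}. \<forall>s\<in>{1..nS I}. \<forall>t\<in>{1..nT I}. 0 \<le> x v s t \<and> x v s t \<le> 1) \<and>
     (\<forall>v\<in>{1..nV I}. \<forall>t\<in>{1..nT I}.
        (\<Sum>\<tau>=1..t. \<Sum>s=1..nS I. lam I s \<tau> * x v s \<tau> * (1 - GG I (t - \<tau>))) \<le> 1)"

definition LPobj :: "inst \<Rightarrow> sol \<Rightarrow> real" where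
  "LPobj I x = (\<Sum>t=1..nT I. \<Sum>s=1..nS I.
      lam I s t * min (\<Sum>v=1..nV I. x v s t * pm I v s) 1)"

definition LPval :: "inst \<Rightarrow> real" where
  "LPval I = Sup (LPobj I ` {x. inP I x})"

definition LP_opt :: "inst \<Rightarrow> sol \<Rightarrow> bool" where
  "LP_opt I x \<longleftrightarrow> inP I x \<and> (\<forall>y. inP I y \<longrightarrow> LPobj I y \<le> LPobj I x)"

definition fexa :: "inst \<Rightarrow> sol \<Rightarrow> real" where
  "fexa I x = (\<Sum>t=1..nT I. \<Sum>s=1..nS I.
      lam I s t * (1 - (\<Prod>v=1..nV I. 1 - x v s t * pm I v s)))"

definition grad_f :: "inst \<Rightarrow> sol \<Rightarrow> sol" where
  "grad_f I x v s t = lam I s t * pm I v s * (\<Prod>u\<in>{1..nV I} - {v}. 1 - x u s t * pm I u s)"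

definition inner_sol :: "inst \<Rightarrow> sol \<Rightarrow> sol \<Rightarrow> real" where
  "inner_sol I x y = (\<Sum>v=1..nV I. \<Sum>s=1..nS I. \<Sum>t=1..nT I. x v s t * y v s t)"

text \<open>x_AA: output of the continuous-greedy procedure with m steps and iterates xs, directions ys\<close>
definition AA_output :: "inst \<Rightarrow> nat \<Rightarrow> (nat \<Rightarrow> sol) \<Rightarrow> (nat \<Rightarrow> sol) \<Rightarrow> sol \<Rightarrow> bool" where
  "AA_output I m xs ys x \<longleftrightarrow>
     m \<ge> 1 \<and> xs 0 = (\<lambda>v s t. 0) \<and>
     (\<forall>i\<in>{1..m}.
        inP I (ys i) \<and>
        (\<forall>y. inP I y \<longrightarrow> inner_sol I y (grad_f I (xs (i - 1))) \<le> inner_sol I (ys i) (grad_f I (xs (i - 1)))) \<and>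
        xs i = (\<lambda>v s t. xs (i - 1) v s t + ys i v s t / real m)) \<and>
     x = xs m"

definition SQ_feas :: "inst \<Rightarrow> (nat \<Rightarrow> nat \<Rightarrow> real) \<Rightarrow> bool" where
  "SQ_feas I y \<longleftrightarrow>
     (\<forall>s\<in>{1..nS I}. \<forall>t\<in>{1..nT I}. 0 \<le> y s t \<and> y s t \<le> 1) \<and>
     (\<forall>t\<in>{1..nT I}. (\<Sum>\<tau>=1..t. \<Sum>s=1..nS I. lam I s \<tau> * y s \<tau> * (1 - GG I (t - \<tau>))) \<le> 1)"

definition SQ_obj :: "inst \<Rightarrow> sol \<Rightarrow> nat \<Rightarrow> (nat \<Rightarrow> nat \<Rightarrow> real) \<Rightarrow> real" where
  "SQ_obj I x v y = (\<Sum>t=1..nT I. \<Sum>s=1..nS I.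
      lam I s t * (\<Prod>u\<in>{1..<v}. 1 - pm I u s * x u s t) * pm I v s * y s t)"

definition SQ_output :: "inst \<Rightarrow> sol \<Rightarrow> bool" where
  "SQ_output I x \<longleftrightarrow>
     (\<forall>v\<in>{1..nV I}. SQ_feas I (x v) \<and> (\<forall>y. SQ_feas I y \<longrightarrow> SQ_obj I x v y \<le> SQ_obj I x v (x v)))"

definition xstar_choice :: "inst \<Rightarrow> sol \<Rightarrow> sol \<Rightarrow> sol \<Rightarrow> sol \<Rightarrow> bool" where
  "xstar_choice I xLP xAA xSQ xs \<longleftrightarrow>
     xs \<in> {xLP, xAA, xSQ} \<and> (\<forall>y\<in>{xLP, xAA, xSQ}. fexa I y \<le> fexa I xs)"

text \<open>Offline part of the SN policy: arrays xt (= x tilde), r, J satisfying the defining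
  backward recursion (which determines them uniquely on the relevant index ranges).\<close>
definition SN_arrays :: "inst \<Rightarrow> sol \<Rightarrow> sol \<Rightarrow> sol \<Rightarrow> (nat \<Rightarrow> nat \<Rightarrow> real) \<Rightarrow> bool" where
  "SN_arrays I xs xt r J \<longleftrightarrow>
     (\<forall>v\<in>{1..nV I}. \<forall>s\<in>{1..nS I}. \<forall>t\<in>{1..nT I}.
        r v s t = pm I v s * (\<Prod>u\<in>{1..<v}. 1 - xt u s t * pm I u s)) \<and>
     (\<forall>v\<in>{1..nV I}. J v (nT I + 1) = 0) \<and>
     (\<forall>v\<in>{1..nV I}. \<forall>s\<in>{1..nS I}. \<forall>t\<in>{1..nT I}.
        xt v s t = xs v s t *
          (if r v s t + (\<Sum>\<tau>=t+1..nT I. gg I (\<tau> - t) * J v \<tau>) \<ge> J v (t + 1) then 1 else 0)) \<and>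
     (\<forall>v\<in>{1..nV I}. \<forall>t\<in>{1..nT I}.
        J v t = lam0 I t * J v (t + 1) +
          (\<Sum>s=1..nS I. lam I s t * ((1 - xt v s t) * J v (t + 1) +
              xt v s t * (r v s t + (\<Sum>\<tau>=t+1..nT I. gg I (\<tau> - t) * J v \<tau>)))))"

text \<open>Online part / stochastic process. For each volunteer, independently:
  (notified?, responds positively?, inter-activity time Z).\<close>
definition vol_pmf :: "inst \<Rightarrow> sol \<Rightarrow> nat \<Rightarrow> nat \<Rightarrow> nat \<Rightarrow> (bool \<times> bool \<times> nat) pmf" where
  "vol_pmf I xt v s t = pair_pmf (bernoulli_pmf (xt v s t)) (pair_pmf (bernoulli_pmf (pm I v s)) (gZ I))"

text \<open>State a: volunteer v is active at time t iff a v \<le> t (all initially active: a = 0).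
  polval I xt n t a = expected number of tasks completed in periods t, ..., t+n-1
  under SN (notification probabilities xt) starting in state a at period t.\<close>
primrec polval :: "inst \<Rightarrow> sol \<Rightarrow> nat \<Rightarrow> nat \<Rightarrow> (nat \<Rightarrow> nat) \<Rightarrow> real" where
  "polval I xt 0 t a = 0"
| "polval I xt (Suc n) t a =
     lam0 I t * polval I xt n (Suc t) a +
     (\<Sum>s=1..nS I. lam I s t *
        measure_pmf.expectation (Pi_pmf {1..nV I} (False, False, 0) (\<lambda>v. vol_pmf I xt v s t))
          (\<lambda>\<omega>. (if \<exists>v\<in>{1..nV I}. fst (\<omega> v) \<and> a v \<le> t \<and> fst (snd (\<omega> v)) then 1 else 0)
               + polval I xt n (Suc t)
                   (\<lambda>v. if v \<in> {1..nV I} \<and> fst (\<omega> v) \<and> a v \<le> t then t + snd (snd (\<omega> v)) else a v)))"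

definition POL_SN :: "inst \<Rightarrow> sol \<Rightarrow> real" where
  "POL_SN I xt = polval I xt (nT I) 1 (\<lambda>v. 0)"

end

theory Submission
  imports Defs
begin

(* Both sides are compared through the values J computed by the SN policy.  J v t is the value of
   volunteer v active at period t when she is credited r v s t for each notification, the
   probability that she is the first responder if all earlier volunteers were still active.

   Policy side: earlier volunteers that are inactive only raise v's chance of being the first
   responder, so the real completion probability dominates the sum of the active volunteers'
   credits; induction over the periods gives POL >= sum_v J v 1.

   Benchmark side: thresholding xs into xt drops only notifications of negative marginal value,
   and Abel summation writes the value lost by inactivity as a sum of decrements of J weighted
   by survival probabilities 1 - G.  A hazard rate of at least q makes every survival weight
   shrink by 1 - q per period, so the LP constraint bounds the total weight by 1 - q and gives
   sum_{t,s} lam xs r <= (2 - q) J v 1.  Summing over v bounds f(xs), and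
   f(xs) >= f(xLP) >= (1 - 1/e) LP by concavity of 1 - exp(-y). *)

lemma integrable_measure_pmf_bounded:
  fixes f :: "'a \<Rightarrow> real"
  assumes "\<And>x. \<bar>f x\<bar> \<le> B"
  shows "integrable (measure_pmf M) f"
  by (rule measure_pmf.integrable_const_bound[where B = B]) (use assms in auto)

lemma expectation_measure_pmf_bounds:
  fixes f :: "'a \<Rightarrow> real"
  assumes "\<And>x. 0 \<le> f x \<and> f x \<le> B"
  shows "0 \<le> measure_pmf.expectation M f \<and> measure_pmf.expectation M f \<le> B"
proof
  show "0 \<le> measure_pmf.expectation M f"
    by (rule Bochner_Integration.integral_nonneg) (use assms in auto)
  have "integrable (measure_pmf M) f"
    by (rule integrable_measure_pmf_bounded[where B = B]) (use assms in force)
  then show "measure_pmf.expectation M f \<le> B"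
    by (rule measure_pmf.integral_le_const) (use assms in auto)
qed

lemma expectation_pair_pmf_bounded:
  fixes f :: "'a \<times> 'b \<Rightarrow> real"
  assumes "\<And>x. \<bar>f x\<bar> \<le> B"
  shows "measure_pmf.expectation (pair_pmf M N) f =
    measure_pmf.expectation M (\<lambda>x. measure_pmf.expectation N (\<lambda>y. f (x, y)))"
proof -
  have bind: "measure_pmf.expectation (bind_pmf A F) h =
      measure_pmf.expectation A (\<lambda>x. measure_pmf.expectation (F x) h)"
    if "\<And>x. \<bar>h x\<bar> \<le> B" for A :: "'c pmf" and F :: "'c \<Rightarrow> 'd pmf" and h :: "'d \<Rightarrow> real"
    unfolding measure_pmf_bind
    by (rule integral_bind[where K = "count_space UNIV" and B = B and B' = 1])
      (use that in \<open>auto simp: measure_pmf_in_subprob_space measure_pmf.finite_measure_axioms\<close>)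
  show ?thesis
    unfolding pair_pmf_def using assms by (simp add: bind)
qed

lemma expectation_sum_Pi_pmf_bounded:
  fixes g :: "'a \<Rightarrow> 'b \<Rightarrow> real"
  assumes "finite A" and "\<And>v y. v \<in> A \<Longrightarrow> \<bar>g v y\<bar> \<le> B"
  shows "measure_pmf.expectation (Pi_pmf A d p) (\<lambda>\<omega>. \<Sum>v\<in>A. g v (\<omega> v)) =
    (\<Sum>v\<in>A. measure_pmf.expectation (p v) (g v))"
proof -
  have "measure_pmf.expectation (Pi_pmf A d p) (\<lambda>\<omega>. \<Sum>v\<in>A. g v (\<omega> v)) =
      (\<Sum>v\<in>A. measure_pmf.expectation (map_pmf (\<lambda>\<omega>. \<omega> v) (Pi_pmf A d p)) (g v))"
    by (subst Bochner_Integration.integral_sum)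
      (auto intro: integrable_measure_pmf_bounded[where B = B] assms(2))
  also have "\<dots> = (\<Sum>v\<in>A. measure_pmf.expectation (p v) (g v))"
    using assms(1) by (intro sum.cong refl) (simp add: Pi_pmf_component)
  finally show ?thesis .
qed

lemma expectation_exists_Pi_pmf:
  assumes "finite A"
  shows "measure_pmf.expectation (Pi_pmf A d p) (\<lambda>\<omega>. of_bool (\<exists>v\<in>A. P v (\<omega> v)) :: real) =
    1 - (\<Prod>v\<in>A. 1 - measure_pmf.expectation (p v) (\<lambda>y. of_bool (P v y)))"
proof -
  have "(\<lambda>\<omega>. of_bool (\<exists>v\<in>A. P v (\<omega> v)) :: real) =
      (\<lambda>\<omega>. 1 - (\<Prod>v\<in>A. 1 - of_bool (P v (\<omega> v))))"
    using assms by (auto simp: prod_zero_iff)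
  moreover have
    "integrable (measure_pmf (Pi_pmf A d p)) (\<lambda>\<omega>. \<Prod>v\<in>A. 1 - of_bool (P v (\<omega> v)) :: real)"
    by (rule integrable_measure_pmf_bounded[where B = 1]) (simp add: abs_prod prod_le_1)
  ultimately have "measure_pmf.expectation (Pi_pmf A d p) (\<lambda>\<omega>. of_bool (\<exists>v\<in>A. P v (\<omega> v)) :: real) =
      1 - measure_pmf.expectation (Pi_pmf A d p) (\<lambda>\<omega>. \<Prod>v\<in>A. 1 - of_bool (P v (\<omega> v)) :: real)"
    by simp
  also have "\<dots> = 1 - (\<Prod>v\<in>A. measure_pmf.expectation (p v) (\<lambda>y. 1 - of_bool (P v y)))"
    using assms
    by (subst expectation_prod_Pi_pmf) (auto intro: integrable_measure_pmf_bounded[where B = 1])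
  also have "\<dots> = 1 - (\<Prod>v\<in>A. 1 - measure_pmf.expectation (p v) (\<lambda>y. of_bool (P v y)))"
    by (simp add: integrable_measure_pmf_bounded[where B = 1])
  finally show ?thesis .
qed

lemma one_minus_prod_eq_sum:
  fixes e :: "nat \<Rightarrow> 'a::comm_ring_1"
  shows "1 - (\<Prod>v=1..n. 1 - e v) = (\<Sum>v=1..n. e v * (\<Prod>u\<in>{1..<v}. 1 - e u))"
proof (induction n)
  case 0
  then show ?case
    by simp
next
  case (Suc n)
  have "{1..<Suc n} = {1..n}"
    by auto
  then show ?case
    using Suc by (simp add: algebra_simps)
qed

lemma prod_one_minus_mono:
  fixes b c :: "'a \<Rightarrow> real"
  assumes "\<And>u. u \<in> A \<Longrightarrow> 0 \<le> b u \<and> b u \<le> c u \<and> c u \<le> 1"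
  shows "(\<Prod>u\<in>A. 1 - c u) \<le> (\<Prod>u\<in>A. 1 - b u)"
  using assms by (intro prod_mono) auto

lemma sum_upper_triangle_swap:
  fixes F :: "nat \<Rightarrow> nat \<Rightarrow> 'a::comm_monoid_add"
  shows "(\<Sum>t=1..T. \<Sum>\<sigma>=t+1..T. F t \<sigma>) = (\<Sum>\<sigma>=1..T. \<Sum>t\<in>{1..<\<sigma>}. F t \<sigma>)"
proof -
  have "(\<Sum>t=1..T. \<Sum>\<sigma>\<in>{\<sigma>\<in>{1..T}. t < \<sigma>}. F t \<sigma>) = (\<Sum>\<sigma>=1..T. \<Sum>t\<in>{t\<in>{1..T}. t < \<sigma>}. F t \<sigma>)"
    by (rule sum.swap_restrict) auto
  moreover have "{\<sigma>\<in>{1..T}. t < \<sigma>} = {t+1..T}" for t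
    by auto
  moreover have "{t\<in>{1..T}. t < \<sigma>} = {1..<\<sigma>}" if "\<sigma> \<in> {1..T}" for \<sigma>
    using that by auto
  ultimately show ?thesis
    by (metis (no_types, lifting) sum.cong)
qed

lemma one_minus_prod_ge_min_sum:
  fixes e :: "'a \<Rightarrow> real"
  assumes "finite A" and "\<And>v. v \<in> A \<Longrightarrow> 0 \<le> e v \<and> e v \<le> 1"
  shows "(1 - exp (-1)) * min (\<Sum>v\<in>A. e v) 1 \<le> 1 - (\<Prod>v\<in>A. 1 - e v)"
proof -
  define S where "S = (\<Sum>v\<in>A. e v)"
  have "0 \<le> S"
    unfolding S_def using assms(2) by (intro sum_nonneg) auto
  have "(\<Prod>v\<in>A. 1 - e v) \<le> (\<Prod>v\<in>A. exp (- e v))"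
  proof (rule prod_mono)
    fix v
    assume "v \<in> A"
    then show "0 \<le> 1 - e v \<and> 1 - e v \<le> exp (- e v)"
      using assms(2) exp_ge_add_one_self[of "- e v"] by auto
  qed
  also have "\<dots> = exp (- S)"
    unfolding S_def using exp_sum[OF assms(1), of "\<lambda>v. - e v"] by (simp add: sum_negf)
  finally have "(\<Prod>v\<in>A. 1 - e v) \<le> exp (- S)" .
  moreover have "(1 - exp (-1)) * min S 1 \<le> 1 - exp (- S)"
  proof (cases "S \<le> 1")
    case True
    have "exp ((1 - S) *\<^sub>R 0 + S *\<^sub>R (-1)) \<le> (1 - S) * exp 0 + S * exp (-1)"
      by (rule convex_onD[OF exp_convex]) (use True \<open>0 \<le> S\<close> in auto)
    then show ?thesis
      using True by (simp add: algebra_simps)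
  next
    case False
    then show ?thesis
      by simp
  qed
  ultimately show ?thesis
    unfolding S_def by simp
qed

section \<open>The instance and the benchmark\<close>

lemma lam_nonneg: "valid_inst I \<Longrightarrow> s \<in> {1..nS I} \<Longrightarrow> t \<in> {1..nT I} \<Longrightarrow> 0 \<le> lam I s t"
  unfolding valid_inst_def by auto

lemma lam0_nonneg: "valid_inst I \<Longrightarrow> t \<in> {1..nT I} \<Longrightarrow> 0 \<le> lam0 I t"
  unfolding valid_inst_def lam0_def by auto

lemma pm_bounds:
  "valid_inst I \<Longrightarrow> v \<in> {1..nV I} \<Longrightarrow> s \<in> {1..nS I} \<Longrightarrow> 0 \<le> pm I v s \<and> pm I v s \<le> 1"
  unfolding valid_inst_def by auto

lemma expectation_vol_pmf:
  fixes f :: "bool \<times> bool \<times> nat \<Rightarrow> real"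
  assumes f: "\<And>y. \<bar>f y\<bar> \<le> B"
    and x: "0 \<le> xt v s t" "xt v s t \<le> 1" and p: "0 \<le> pm I v s" "pm I v s \<le> 1"
  shows "measure_pmf.expectation (vol_pmf I xt v s t) f =
    xt v s t * (pm I v s * measure_pmf.expectation (gZ I) (\<lambda>z. f (True, True, z))
      + (1 - pm I v s) * measure_pmf.expectation (gZ I) (\<lambda>z. f (True, False, z)))
    + (1 - xt v s t) * (pm I v s * measure_pmf.expectation (gZ I) (\<lambda>z. f (False, True, z))
      + (1 - pm I v s) * measure_pmf.expectation (gZ I) (\<lambda>z. f (False, False, z)))"
  unfolding vol_pmf_def using x p f
  by (simp add: expectation_pair_pmf_bounded[where B = B] algebra_simps)

lemma gg_nonneg: "0 \<le> gg I \<tau>"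
  by (simp add: gg_def)

lemma GG_0 [simp]: "GG I 0 = 0"
  by (simp add: GG_def)

lemma GG_Suc: "GG I (Suc k) = GG I k + gg I (Suc k)"
  by (simp add: GG_def)

lemma GG_le_1: "GG I \<tau> \<le> 1"
proof -
  have "GG I \<tau> = measure_pmf.prob (gZ I) {1..\<tau>}"
    by (simp add: GG_def gg_def measure_measure_pmf_finite)
  then show ?thesis
    by simp
qed

lemma mdhr_le_1:
  assumes "is_mdhr I q"
  shows "q \<le> 1"
proof -
  have "q \<le> hazard I 1"
    using assms unfolding is_mdhr_def by auto
  also have "\<dots> = gg I 1"
    by (simp add: hazard_def)
  also have "\<dots> \<le> 1"
    by (simp add: gg_def pmf_le_1)
  finally show ?thesis .
qed

lemma survival_le_mdhr:
  assumes "is_mdhr I q" and "1 \<le> j"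
  shows "1 - GG I j \<le> (1 - q) * (1 - GG I (j - 1))"
proof -
  obtain k where j: "j = Suc k"
    using assms(2) by (cases j) auto
  have q: "q \<le> hazard I j"
    using assms unfolding is_mdhr_def by auto
  have G: "GG I j = GG I k + gg I j"
    using GG_Suc j by simp
  show ?thesis
  proof (cases "gg I j = 0 \<and> 1 - GG I k = 0")
    case True
    then show ?thesis
      using G j by simp
  next
    case False
    then have pos: "0 < 1 - GG I k"
      using G GG_le_1[of I j] gg_nonneg[of I j] by auto
    then have "q \<le> gg I j / (1 - GG I k)"
      using q False by (simp add: hazard_def j)
    then have "q * (1 - GG I k) \<le> gg I j"
      using pos by (simp add: field_simps)
    then show ?thesis
      using G j by (simp add: algebra_simps)
  qed
qed

lemma summation_by_parts_GG:
  fixes f :: "nat \<Rightarrow> real"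
  shows "(\<Sum>\<sigma>=t+1..t+k. (f \<sigma> - f (\<sigma> + 1)) * GG I (\<sigma> - t)) =
    (\<Sum>\<tau>=t+1..t+k. gg I (\<tau> - t) * (f \<tau> - f (t + k + 1)))"
proof (induction k)
  case 0
  then show ?case
    by simp
next
  case (Suc k)
  have GG_k: "(\<Sum>\<tau>=t+1..t+k. gg I (\<tau> - t)) = GG I k"
    using sum.shift_bounds_cl_nat_ivl[of "\<lambda>\<tau>. gg I (\<tau> - t)" 1 t k]
    by (simp add: GG_def add.commute)
  have "(\<Sum>\<tau>=t+1..t+k. gg I (\<tau> - t) * (f \<tau> - f (t + Suc k + 1))) =
      (\<Sum>\<tau>=t+1..t+k. gg I (\<tau> - t) * (f \<tau> - f (t + k + 1)))
      + (\<Sum>\<tau>=t+1..t+k. gg I (\<tau> - t)) * (f (t + k + 1) - f (t + Suc k + 1))"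
    by (simp add: right_diff_distrib sum_subtractf sum_distrib_right[symmetric] algebra_simps)
  then show ?case
    using Suc GG_k GG_Suc[of I k] by (simp add: algebra_simps)
qed

lemma inP_bounds:
  "inP I x \<Longrightarrow> v \<in> {1..nV I} \<Longrightarrow> s \<in> {1..nS I} \<Longrightarrow> t \<in> {1..nT I} \<Longrightarrow>
    0 \<le> x v s t \<and> x v s t \<le> 1"
  unfolding inP_def by blast

lemma inP_load:
  "inP I x \<Longrightarrow> v \<in> {1..nV I} \<Longrightarrow> t \<in> {1..nT I} \<Longrightarrow>
    (\<Sum>\<tau>=1..t. \<Sum>s=1..nS I. lam I s \<tau> * x v s \<tau> * (1 - GG I (t - \<tau>))) \<le> 1"
  unfolding inP_def by blast

lemma delayed_load_le:
  assumes valid: "valid_inst I" and mdhr: "is_mdhr I q" and x: "inP I x"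
    and v: "v \<in> {1..nV I}" and \<sigma>: "\<sigma> \<in> {1..nT I}"
  shows "(\<Sum>t\<in>{1..<\<sigma>}. (\<Sum>s=1..nS I. lam I s t * x v s t) * (1 - GG I (\<sigma> - t))) \<le> 1 - q"
proof (cases "\<sigma> = 1")
  case True
  then show ?thesis
    using mdhr_le_1[OF mdhr] by simp
next
  case False
  define load where "load t = (\<Sum>s=1..nS I. lam I s t * x v s t)" for t
  have "(\<Sum>t\<in>{1..<\<sigma>}. load t * (1 - GG I (\<sigma> - t))) \<le>
      (\<Sum>t\<in>{1..<\<sigma>}. (1 - q) * (load t * (1 - GG I (\<sigma> - 1 - t))))"
  proof (rule sum_mono)
    fix t
    assume t: "t \<in> {1..<\<sigma>}"
    have "1 \<le> \<sigma> - t"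
      using t by auto
    from survival_le_mdhr[OF mdhr this]
    have "1 - GG I (\<sigma> - t) \<le> (1 - q) * (1 - GG I (\<sigma> - 1 - t))"
      by (simp add: diff_commute)
    moreover have "0 \<le> load t"
      unfolding load_def using t \<sigma> inP_bounds[OF x v] lam_nonneg[OF valid]
      by (intro sum_nonneg mult_nonneg_nonneg) auto
    ultimately show "load t * (1 - GG I (\<sigma> - t)) \<le> (1 - q) * (load t * (1 - GG I (\<sigma> - 1 - t)))"
      by (metis mult_left_mono mult.left_commute)
  qed
  also have "\<dots> = (1 - q) * (\<Sum>t=1..\<sigma>-1. load t * (1 - GG I (\<sigma> - 1 - t)))"
  proof -
    have "{1..<\<sigma>} = {1..\<sigma>-1}"
      using False \<sigma> by auto
    then show ?thesis
      by (simp only: sum_distrib_left)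
  qed
  also have "(\<Sum>t=1..\<sigma>-1. load t * (1 - GG I (\<sigma> - 1 - t))) =
      (\<Sum>\<tau>=1..\<sigma>-1. \<Sum>s=1..nS I. lam I s \<tau> * x v s \<tau> * (1 - GG I (\<sigma> - 1 - \<tau>)))"
    unfolding load_def by (simp add: sum_distrib_right)
  also have "\<dots> \<le> 1"
    by (rule inP_load[OF x v]) (use False \<sigma> in auto)
  finally have "(\<Sum>t\<in>{1..<\<sigma>}. load t * (1 - GG I (\<sigma> - t))) \<le> (1 - q) * 1"
    using mdhr_le_1[OF mdhr] by (simp add: mult_left_mono)
  then show ?thesis
    by (simp add: load_def)
qed

lemma inP_mean:
  assumes "1 \<le> m" and y: "\<And>j. j \<in> {1..m} \<Longrightarrow> inP I (y j)"
  shows "inP I (\<lambda>v s t. (\<Sum>j=1..m. y j v s t) / real m)"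
proof -
  have "0 \<le> (\<Sum>j=1..m. y j v s t) / real m \<and> (\<Sum>j=1..m. y j v s t) / real m \<le> 1"
    if "v \<in> {1..nV I}" "s \<in> {1..nS I}" "t \<in> {1..nT I}" for v s t
  proof -
    have "0 \<le> (\<Sum>j=1..m. y j v s t)"
      using inP_bounds[OF y that] by (auto intro: sum_nonneg)
    moreover have "(\<Sum>j=1..m. y j v s t) \<le> (\<Sum>j=1..m. 1)"
      by (rule sum_mono) (use inP_bounds[OF y that] in auto)
    ultimately show ?thesis
      using assms(1) by simp
  qed
  moreover have "(\<Sum>\<tau>=1..t. \<Sum>s=1..nS I.
      lam I s \<tau> * ((\<Sum>j=1..m. y j v s \<tau>) / real m) * (1 - GG I (t - \<tau>))) \<le> 1"
    if v: "v \<in> {1..nV I}" and t: "t \<in> {1..nT I}" for v t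
  proof -
    define F where "F j \<tau> s = lam I s \<tau> * y j v s \<tau> * (1 - GG I (t - \<tau>))" for j \<tau> s
    have "(\<Sum>\<tau>=1..t. \<Sum>s=1..nS I.
        lam I s \<tau> * ((\<Sum>j=1..m. y j v s \<tau>) / real m) * (1 - GG I (t - \<tau>))) =
        (\<Sum>\<tau>=1..t. \<Sum>s=1..nS I. \<Sum>j=1..m. F j \<tau> s) / real m"
      by (simp add: F_def sum_distrib_left sum_distrib_right sum_divide_distrib)
    also have "(\<Sum>\<tau>=1..t. \<Sum>s=1..nS I. \<Sum>j=1..m. F j \<tau> s) =
        (\<Sum>j=1..m. \<Sum>\<tau>=1..t. \<Sum>s=1..nS I. F j \<tau> s)"
      by (subst sum.swap) (rule sum.cong[OF refl], rule sum.swap)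
    also have "\<dots> \<le> (\<Sum>j=1..m. 1)"
      unfolding F_def using inP_load[OF y v t] by (intro sum_mono) auto
    finally show ?thesis
      using assms(1) by (simp add: divide_right_mono)
  qed
  ultimately show ?thesis
    unfolding inP_def by blast
qed

lemma AA_output_inP:
  assumes "AA_output I m xseq yseq x"
  shows "inP I x"
proof -
  have m: "1 \<le> m" and x: "x = xseq m" and y: "\<And>j. j \<in> {1..m} \<Longrightarrow> inP I (yseq j)"
    using assms unfolding AA_output_def by auto
  have "i \<le> m \<Longrightarrow> xseq i = (\<lambda>v s t. (\<Sum>j=1..i. yseq j v s t) / real m)" for i
  proof (induction i)
    case 0
    then show ?case
      using assms unfolding AA_output_def by simp
  next
    case (Suc i)
    then have "xseq (Suc i) = (\<lambda>v s t. xseq i v s t + yseq (Suc i) v s t / real m)"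
      using assms unfolding AA_output_def by auto
    then show ?case
      using Suc by (simp add: add_divide_distrib)
  qed
  then show ?thesis
    using inP_mean[OF m y] x by simp
qed

lemma SQ_output_inP: "SQ_output I x \<Longrightarrow> inP I x"
  unfolding SQ_output_def SQ_feas_def inP_def by blast

lemma LPval_eq_LPobj: "LP_opt I x \<Longrightarrow> LPval I = LPobj I x"
  unfolding LPval_def LP_opt_def by (rule cSup_eq_maximum) auto

lemma LPobj_le_fexa:
  assumes valid: "valid_inst I" and x: "inP I x"
  shows "(1 - exp (-1)) * LPobj I x \<le> fexa I x"
  unfolding LPobj_def fexa_def sum_distrib_left
proof (intro sum_mono)
  fix t s
  assume t: "t \<in> {1..nT I}" and s: "s \<in> {1..nS I}"
  have "(1 - exp (-1)) * min (\<Sum>v=1..nV I. x v s t * pm I v s) 1 \<le>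
      1 - (\<Prod>v=1..nV I. 1 - x v s t * pm I v s)"
    using inP_bounds[OF x _ s t] pm_bounds[OF valid _ s]
    by (intro one_minus_prod_ge_min_sum) (auto intro: mult_le_one)
  then show "(1 - exp (-1)) * (lam I s t * min (\<Sum>v=1..nV I. x v s t * pm I v s) 1) \<le>
      lam I s t * (1 - (\<Prod>v=1..nV I. 1 - x v s t * pm I v s))"
    using lam_nonneg[OF valid s t] by (simp add: mult.left_commute mult_left_mono)
qed

section \<open>The values J computed by the SN policy\<close>

definition reactivation_value :: "inst \<Rightarrow> (nat \<Rightarrow> nat \<Rightarrow> real) \<Rightarrow> nat \<Rightarrow> nat \<Rightarrow> real" where
  "reactivation_value I J v t = (\<Sum>\<tau>=t+1..nT I. gg I (\<tau> - t) * J v \<tau>)"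

locale SN_setting =
  fixes I :: inst and xs xt r :: sol and J :: "nat \<Rightarrow> nat \<Rightarrow> real"
  assumes valid: "valid_inst I" and SN: "SN_arrays I xs xt r J" and feasible: "inP I xs"
begin

lemma SN_J_horizon: "v \<in> {1..nV I} \<Longrightarrow> J v (nT I + 1) = 0"
  using SN unfolding SN_arrays_def by blast

lemma SN_r: "v \<in> {1..nV I} \<Longrightarrow> s \<in> {1..nS I} \<Longrightarrow> t \<in> {1..nT I} \<Longrightarrow>
    r v s t = pm I v s * (\<Prod>u\<in>{1..<v}. 1 - xt u s t * pm I u s)"
  using SN unfolding SN_arrays_def by blast

lemma SN_xt: "v \<in> {1..nV I} \<Longrightarrow> s \<in> {1..nS I} \<Longrightarrow> t \<in> {1..nT I} \<Longrightarrow>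
    xt v s t = xs v s t * of_bool (J v (t + 1) \<le> r v s t + reactivation_value I J v t)"
  using SN[unfolded SN_arrays_def, THEN conjunct2, THEN conjunct2, THEN conjunct1]
  by (simp add: reactivation_value_def)

lemma SN_J: "v \<in> {1..nV I} \<Longrightarrow> t \<in> {1..nT I} \<Longrightarrow>
    J v t = lam0 I t * J v (t + 1) + (\<Sum>s=1..nS I. lam I s t * ((1 - xt v s t) * J v (t + 1)
      + xt v s t * (r v s t + reactivation_value I J v t)))"
  using SN unfolding SN_arrays_def reactivation_value_def by blast

lemma SN_xt_bounds:
  assumes "v \<in> {1..nV I}" "s \<in> {1..nS I}" "t \<in> {1..nT I}"
  shows "0 \<le> xt v s t" "xt v s t \<le> xs v s t" "xt v s t \<le> 1"
  using SN_xt[OF assms] feasible assms unfolding inP_def by auto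

lemma J_decrement:
  assumes v: "v \<in> {1..nV I}" and t: "t \<in> {1..nT I}"
  shows "J v t - J v (t + 1) =
    (\<Sum>s=1..nS I. lam I s t * xt v s t * (r v s t + reactivation_value I J v t - J v (t + 1)))"
    (is "_ = ?gain")
proof -
  have "(\<Sum>s=1..nS I. lam I s t * ((1 - xt v s t) * J v (t + 1)
        + xt v s t * (r v s t + reactivation_value I J v t))) =
      (\<Sum>s=1..nS I. lam I s t * J v (t + 1)
        + lam I s t * xt v s t * (r v s t + reactivation_value I J v t - J v (t + 1)))"
    by (rule sum.cong) (simp_all add: algebra_simps)
  also have "\<dots> = (\<Sum>s=1..nS I. lam I s t) * J v (t + 1) + ?gain"
    by (simp add: sum.distrib sum_distrib_right)
  finally have "J v t = (lam0 I t + (\<Sum>s=1..nS I. lam I s t)) * J v (t + 1) + ?gain"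
    using SN_J[OF v t] by (simp add: distrib_right)
  then show ?thesis
    by (simp add: lam0_def)
qed

lemma J_decrement_ge:
  assumes v: "v \<in> {1..nV I}" and t: "t \<in> {1..nT I}"
  shows "0 \<le> J v t - J v (t + 1)"
    and "(\<Sum>s=1..nS I. lam I s t * xs v s t * (r v s t + reactivation_value I J v t - J v (t + 1)))
      \<le> J v t - J v (t + 1)"
proof -
  define gain where "gain s = r v s t + reactivation_value I J v t - J v (t + 1)" for s
  have gain_term: "0 \<le> lam I s t * xt v s t * gain s \<and>
      lam I s t * xs v s t * gain s \<le> lam I s t * xt v s t * gain s"
    if s: "s \<in> {1..nS I}" for s
  proof -
    have "0 \<le> lam I s t" "0 \<le> xs v s t"
      using lam_nonneg[OF valid s t] inP_bounds[OF feasible v s t] by auto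
    moreover have "xt v s t = (if 0 \<le> gain s then xs v s t else 0)"
      using SN_xt[OF v s t] by (simp add: gain_def)
    ultimately show ?thesis
      by (simp add: mult_nonneg_nonpos)
  qed
  have "0 \<le> (\<Sum>s=1..nS I. lam I s t * xt v s t * gain s)"
    using gain_term by (intro sum_nonneg) blast
  then show "0 \<le> J v t - J v (t + 1)"
    using J_decrement[OF v t] by (simp add: gain_def)
  have "(\<Sum>s=1..nS I. lam I s t * xs v s t * gain s) \<le> (\<Sum>s=1..nS I. lam I s t * xt v s t * gain s)"
    using gain_term by (intro sum_mono) blast
  then show "(\<Sum>s=1..nS I. lam I s t * xs v s t * gain s) \<le> J v t - J v (t + 1)"
    using J_decrement[OF v t] by (simp add: gain_def)
qed

lemma J_telescope:
  assumes v: "v \<in> {1..nV I}" and t: "t \<le> nT I"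
  shows "J v (t + 1) = (\<Sum>\<sigma>=t+1..nT I. J v \<sigma> - J v (\<sigma> + 1))"
  using sum_Suc_diff[of "t + 1" "nT I" "\<lambda>\<sigma>. - J v \<sigma>"] t SN_J_horizon[OF v] by simp

lemma J_Suc_minus_reactivation:
  assumes v: "v \<in> {1..nV I}" and t: "t \<le> nT I"
  shows "J v (t + 1) - reactivation_value I J v t =
    (\<Sum>\<sigma>=t+1..nT I. (J v \<sigma> - J v (\<sigma> + 1)) * (1 - GG I (\<sigma> - t)))"
proof -
  have "reactivation_value I J v t = (\<Sum>\<sigma>=t+1..nT I. (J v \<sigma> - J v (\<sigma> + 1)) * GG I (\<sigma> - t))"
    using summation_by_parts_GG[where f = "J v" and t = t and k = "nT I - t" and I = I] t
      SN_J_horizon[OF v]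
    by (simp add: reactivation_value_def)
  then show ?thesis
    using J_telescope[OF v t] by (simp add: sum_subtractf[symmetric] right_diff_distrib)
qed

lemma reward_le_decrement:
  assumes v: "v \<in> {1..nV I}" and t: "t \<in> {1..nT I}"
  shows "(\<Sum>s=1..nS I. lam I s t * xs v s t * r v s t) \<le> (J v t - J v (t + 1)) +
    (\<Sum>s=1..nS I. lam I s t * xs v s t) *
      (\<Sum>\<sigma>=t+1..nT I. (J v \<sigma> - J v (\<sigma> + 1)) * (1 - GG I (\<sigma> - t)))"
proof -
  have "(\<Sum>s=1..nS I. lam I s t * xs v s t * (r v s t + reactivation_value I J v t - J v (t + 1))) =
      (\<Sum>s=1..nS I. lam I s t * xs v s t * r v s t)
        - (\<Sum>s=1..nS I. lam I s t * xs v s t) * (J v (t + 1) - reactivation_value I J v t)"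
    unfolding sum_distrib_right sum_subtractf[symmetric]
    by (rule sum.cong) (simp_all add: algebra_simps)
  then show ?thesis
    using J_decrement_ge(2)[OF v t] J_Suc_minus_reactivation[OF v, of t] t by simp
qed

lemma volunteer_reward_le:
  assumes mdhr: "is_mdhr I q" and v: "v \<in> {1..nV I}"
  shows "(\<Sum>t=1..nT I. \<Sum>s=1..nS I. lam I s t * xs v s t * r v s t) \<le> (2 - q) * J v 1"
proof -
  define T where "T = nT I"
  define d where "d \<sigma> = J v \<sigma> - J v (\<sigma> + 1)" for \<sigma>
  define load where "load t = (\<Sum>s=1..nS I. lam I s t * xs v s t)" for t
  have "(\<Sum>t=1..T. \<Sum>s=1..nS I. lam I s t * xs v s t * r v s t) \<le>
      (\<Sum>t=1..T. d t + (\<Sum>\<sigma>=t+1..T. load t * (d \<sigma> * (1 - GG I (\<sigma> - t)))))"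
    using reward_le_decrement[OF v]
    by (intro sum_mono) (simp add: T_def d_def load_def sum_distrib_left[symmetric])
  also have "\<dots> = (\<Sum>t=1..T. d t) + (\<Sum>t=1..T. \<Sum>\<sigma>=t+1..T. load t * (d \<sigma> * (1 - GG I (\<sigma> - t))))"
    by (rule sum.distrib)
  also have "\<dots> = (\<Sum>t=1..T. d t) + (\<Sum>\<sigma>=1..T. d \<sigma> * (\<Sum>t\<in>{1..<\<sigma>}. load t * (1 - GG I (\<sigma> - t))))"
    unfolding sum_upper_triangle_swap by (simp add: sum_distrib_left ac_simps)
  also have "\<dots> \<le> (\<Sum>t=1..T. d t) + (\<Sum>\<sigma>=1..T. d \<sigma> * (1 - q))"
    using delayed_load_le[OF valid mdhr feasible v] J_decrement_ge(1)[OF v]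
    by (intro add_left_mono sum_mono mult_left_mono) (auto simp: T_def d_def load_def)
  also have "\<dots> = (2 - q) * (\<Sum>t=1..T. d t)"
    unfolding sum_distrib_right[symmetric] by (simp add: algebra_simps)
  finally show ?thesis
    using J_telescope[OF v, of 0] by (simp add: T_def d_def)
qed

lemma fexa_le_volunteer_rewards:
  "fexa I xs \<le> (\<Sum>v=1..nV I. \<Sum>t=1..nT I. \<Sum>s=1..nS I. lam I s t * xs v s t * r v s t)"
proof -
  have "fexa I xs \<le> (\<Sum>t=1..nT I. \<Sum>s=1..nS I. \<Sum>v=1..nV I. lam I s t * xs v s t * r v s t)"
    unfolding fexa_def
  proof (intro sum_mono)
    fix t s
    assume t: "t \<in> {1..nT I}" and s: "s \<in> {1..nS I}"
    have x: "0 \<le> xt v s t" "xt v s t \<le> xs v s t" "0 \<le> xs v s t * pm I v s" "xs v s t * pm I v s \<le> 1"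
      if "v \<in> {1..nV I}" for v
      using SN_xt_bounds[OF that s t] inP_bounds[OF feasible that s t] pm_bounds[OF valid that s]
      by (auto intro: mult_le_one)
    have "1 - (\<Prod>v=1..nV I. 1 - xs v s t * pm I v s) =
        (\<Sum>v=1..nV I. xs v s t * pm I v s * (\<Prod>u\<in>{1..<v}. 1 - xs u s t * pm I u s))"
      by (rule one_minus_prod_eq_sum)
    also have "\<dots> \<le> (\<Sum>v=1..nV I. xs v s t * pm I v s * (\<Prod>u\<in>{1..<v}. 1 - xt u s t * pm I u s))"
      using x pm_bounds[OF valid _ s]
      by (intro sum_mono mult_left_mono prod_one_minus_mono) (auto intro: mult_right_mono)
    also have "\<dots> = (\<Sum>v=1..nV I. xs v s t * r v s t)"
      using SN_r[OF _ s t] by (intro sum.cong) (auto simp: ac_simps)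
    finally have "lam I s t * (1 - (\<Prod>v=1..nV I. 1 - xs v s t * pm I v s)) \<le>
        lam I s t * (\<Sum>v=1..nV I. xs v s t * r v s t)"
      by (rule mult_left_mono) (rule lam_nonneg[OF valid s t])
    then show "lam I s t * (1 - (\<Prod>v=1..nV I. 1 - xs v s t * pm I v s)) \<le>
        (\<Sum>v=1..nV I. lam I s t * xs v s t * r v s t)"
      by (simp add: sum_distrib_left mult.assoc)
  qed
  also have "\<dots> = (\<Sum>v=1..nV I. \<Sum>t=1..nT I. \<Sum>s=1..nS I. lam I s t * xs v s t * r v s t)"
    by (subst sum.swap) (rule sum.cong[OF refl], rule sum.swap)
  finally show ?thesis .
qed

end

section \<open>Expected number of completed tasks\<close>

definition notify_pmf :: "inst \<Rightarrow> sol \<Rightarrow> nat \<Rightarrow> nat \<Rightarrow> (nat \<Rightarrow> bool \<times> bool \<times> nat) pmf" where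
  "notify_pmf I xt s t = Pi_pmf {1..nV I} (False, False, 0) (\<lambda>v. vol_pmf I xt v s t)"

definition task_completed :: "inst \<Rightarrow> nat \<Rightarrow> (nat \<Rightarrow> nat) \<Rightarrow> (nat \<Rightarrow> bool \<times> bool \<times> nat) \<Rightarrow> bool" where
  "task_completed I t a \<omega> \<longleftrightarrow> (\<exists>v\<in>{1..nV I}. fst (\<omega> v) \<and> a v \<le> t \<and> fst (snd (\<omega> v)))"

definition next_activation ::
    "inst \<Rightarrow> nat \<Rightarrow> (nat \<Rightarrow> nat) \<Rightarrow> (nat \<Rightarrow> bool \<times> bool \<times> nat) \<Rightarrow> nat \<Rightarrow> nat" where
  "next_activation I t a \<omega> =
    (\<lambda>v. if v \<in> {1..nV I} \<and> fst (\<omega> v) \<and> a v \<le> t then t + snd (snd (\<omega> v)) else a v)"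

lemma polval_Suc_eq:
  "polval I xt (Suc n) t a = lam0 I t * polval I xt n (Suc t) a +
    (\<Sum>s=1..nS I. lam I s t * measure_pmf.expectation (notify_pmf I xt s t)
      (\<lambda>\<omega>. of_bool (task_completed I t a \<omega>) + polval I xt n (Suc t) (next_activation I t a \<omega>)))"
  by (simp add: notify_pmf_def task_completed_def next_activation_def of_bool_def)

lemma polval_bounds:
  assumes valid: "valid_inst I"
  shows "1 \<le> t \<Longrightarrow> t + n = nT I + 1 \<Longrightarrow> 0 \<le> polval I xt n t a \<and> polval I xt n t a \<le> n"
proof (induction n arbitrary: t a)
  case 0
  then show ?case
    by simp
next
  case (Suc n)
  then have t: "t \<in> {1..nT I}"
    by auto
  let ?F = "\<lambda>\<omega>. of_bool (task_completed I t a \<omega>) + polval I xt n (Suc t) (next_activation I t a \<omega>)"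
  have "0 \<le> ?F \<omega> \<and> ?F \<omega> \<le> 1 + real n" for \<omega>
    using Suc.IH[of "Suc t" "next_activation I t a \<omega>"] Suc.prems by auto
  then have E: "0 \<le> measure_pmf.expectation M ?F \<and> measure_pmf.expectation M ?F \<le> 1 + real n" for M
    by (rule expectation_measure_pmf_bounds)
  have P: "0 \<le> polval I xt n (Suc t) a \<and> polval I xt n (Suc t) a \<le> 1 + real n"
    using Suc.IH[of "Suc t" a] Suc.prems by auto
  have "polval I xt (Suc n) t a \<le>
      lam0 I t * (1 + real n) + (\<Sum>s=1..nS I. lam I s t * (1 + real n))"
    unfolding polval_Suc_eq using P E lam0_nonneg[OF valid t] lam_nonneg[OF valid _ t]
    by (intro add_mono mult_left_mono sum_mono) auto
  also have "\<dots> = (lam0 I t + (\<Sum>s=1..nS I. lam I s t)) * (1 + real n)"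
    by (simp add: sum_distrib_right distrib_right)
  also have "\<dots> = 1 + real n"
    by (simp add: lam0_def)
  finally show ?case
    unfolding polval_Suc_eq using P E lam0_nonneg[OF valid t] lam_nonneg[OF valid _ t]
    by (auto intro!: add_nonneg_nonneg sum_nonneg)
qed

(* J v is specified only up to the horizon, with J v (nT I + 1) = 0; the truncation makes
   the value of a volunteer who returns after the horizon zero whatever J says there. *)
definition volunteer_value :: "inst \<Rightarrow> (nat \<Rightarrow> nat \<Rightarrow> real) \<Rightarrow> nat \<Rightarrow> nat \<Rightarrow> real" where
  "volunteer_value I J v \<tau> = (if \<tau> \<le> nT I then J v \<tau> else 0)"

definition state_value :: "inst \<Rightarrow> (nat \<Rightarrow> nat \<Rightarrow> real) \<Rightarrow> nat \<Rightarrow> (nat \<Rightarrow> nat) \<Rightarrow> real" where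
  "state_value I J t a = (\<Sum>v=1..nV I. volunteer_value I J v (max t (a v)))"

lemma volunteer_value_abs_le: "\<bar>volunteer_value I J v \<tau>\<bar> \<le> (\<Sum>\<sigma>\<le>nT I. \<bar>J v \<sigma>\<bar>)"
  by (auto simp: volunteer_value_def intro: member_le_sum sum_nonneg)

lemma state_value_abs_le: "\<bar>state_value I J t a\<bar> \<le> (\<Sum>v=1..nV I. \<Sum>\<sigma>\<le>nT I. \<bar>J v \<sigma>\<bar>)"
  unfolding state_value_def
  by (rule order_trans[OF sum_abs]) (intro sum_mono volunteer_value_abs_le)

lemma expectation_reactivation:
  assumes "valid_inst I" and "t \<le> nT I"
  shows "measure_pmf.expectation (gZ I) (\<lambda>z. volunteer_value I J v (max (Suc t) (t + z))) =
    reactivation_value I J v t"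
proof -
  have "measure_pmf.expectation (gZ I) (\<lambda>z. volunteer_value I J v (max (Suc t) (t + z))) =
      (\<Sum>z=1..nT I - t. volunteer_value I J v (max (Suc t) (t + z)) * pmf (gZ I) z)"
  proof (rule integral_measure_pmf_real)
    fix z
    assume "z \<in> set_pmf (gZ I)" and "volunteer_value I J v (max (Suc t) (t + z)) \<noteq> 0"
    moreover have "pmf (gZ I) 0 = 0"
      using assms(1) by (simp add: valid_inst_def)
    ultimately show "z \<in> {1..nT I - t}"
      by (cases "z = 0") (auto simp: volunteer_value_def set_pmf_eq split: if_splits)
  qed simp
  also have "\<dots> = (\<Sum>z=1..nT I - t. gg I z * J v (z + t))"
    by (rule sum.cong) (auto simp: volunteer_value_def gg_def add.commute)
  also have "\<dots> = reactivation_value I J v t"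
    using sum.shift_bounds_cl_nat_ivl[of "\<lambda>\<tau>. gg I (\<tau> - t) * J v \<tau>" 1 t "nT I - t"] assms(2)
    by (simp add: reactivation_value_def)
  finally show ?thesis .
qed

definition notification_credit :: "sol \<Rightarrow> sol \<Rightarrow> nat \<Rightarrow> nat \<Rightarrow> nat \<Rightarrow> (nat \<Rightarrow> nat) \<Rightarrow> real" where
  "notification_credit xt r v s t a = (if a v \<le> t then xt v s t * r v s t else 0)"

definition continuation_value ::
    "inst \<Rightarrow> sol \<Rightarrow> (nat \<Rightarrow> nat \<Rightarrow> real) \<Rightarrow> nat \<Rightarrow> nat \<Rightarrow> nat \<Rightarrow> (nat \<Rightarrow> nat) \<Rightarrow> real" where
  "continuation_value I xt J v s t a =
    (if a v \<le> t
     then xt v s t * reactivation_value I J v t + (1 - xt v s t) * volunteer_value I J v (Suc t)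
     else volunteer_value I J v (a v))"

context SN_setting
begin

lemma expected_completion_ge:
  assumes s: "s \<in> {1..nS I}" and t: "t \<in> {1..nT I}"
  shows "(\<Sum>v=1..nV I. notification_credit xt r v s t a) \<le>
    measure_pmf.expectation (notify_pmf I xt s t) (\<lambda>\<omega>. of_bool (task_completed I t a \<omega>))"
proof -
  define c where "c v = (if a v \<le> t then xt v s t * pm I v s else 0)" for v
  have xt: "0 \<le> xt v s t" "xt v s t \<le> 1" and pm: "0 \<le> pm I v s" "pm I v s \<le> 1"
    if "v \<in> {1..nV I}" for v
    using SN_xt_bounds[OF that s t] pm_bounds[OF valid that s] by auto
  \<comment> \<open>r was computed as if every earlier volunteer u were active, i.e. with
    xt u s t * pm I u s \<ge> c u in place of c u\<close>
  have "(\<Sum>v=1..nV I. notification_credit xt r v s t a) \<le>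
      (\<Sum>v=1..nV I. c v * (\<Prod>u\<in>{1..<v}. 1 - c u))"
  proof (rule sum_mono)
    fix v
    assume v: "v \<in> {1..nV I}"
    have "(\<Prod>u\<in>{1..<v}. 1 - xt u s t * pm I u s) \<le> (\<Prod>u\<in>{1..<v}. 1 - c u)"
      using xt pm v by (intro prod_one_minus_mono) (auto simp: c_def mult_le_one)
    then have "c v * (\<Prod>u\<in>{1..<v}. 1 - xt u s t * pm I u s) \<le> c v * (\<Prod>u\<in>{1..<v}. 1 - c u)"
      using xt[OF v] pm[OF v] by (intro mult_left_mono) (auto simp: c_def)
    moreover have "notification_credit xt r v s t a = c v * (\<Prod>u\<in>{1..<v}. 1 - xt u s t * pm I u s)"
      using SN_r[OF v s t] by (simp add: notification_credit_def c_def mult.assoc)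
    ultimately show "notification_credit xt r v s t a \<le> c v * (\<Prod>u\<in>{1..<v}. 1 - c u)"
      by simp
  qed
  also have "\<dots> = 1 - (\<Prod>v=1..nV I. 1 - c v)"
    by (rule one_minus_prod_eq_sum[symmetric])
  also have "\<dots> =
      measure_pmf.expectation (notify_pmf I xt s t) (\<lambda>\<omega>. of_bool (task_completed I t a \<omega>))"
  proof -
    have "measure_pmf.expectation (vol_pmf I xt v s t)
        (\<lambda>y. of_bool (fst y \<and> a v \<le> t \<and> fst (snd y))) = c v" if "v \<in> {1..nV I}" for v
      using xt[OF that] pm[OF that]
      by (subst expectation_vol_pmf[where B = 1]) (auto simp: c_def)
    then show ?thesis
      unfolding notify_pmf_def task_completed_def
      by (subst expectation_exists_Pi_pmf) (auto intro!: prod.cong)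
  qed
  finally show ?thesis .
qed

lemma expected_next_state_value:
  assumes s: "s \<in> {1..nS I}" and t: "t \<in> {1..nT I}"
  shows "measure_pmf.expectation (notify_pmf I xt s t)
      (\<lambda>\<omega>. state_value I J (Suc t) (next_activation I t a \<omega>)) =
    (\<Sum>v=1..nV I. continuation_value I xt J v s t a)"
proof -
  define g where "g v y = volunteer_value I J v
      (max (Suc t) (if fst y \<and> a v \<le> t then t + snd (snd y) else a v))"
    for v and y :: "bool \<times> bool \<times> nat"
  have g_bound: "\<bar>g v y\<bar> \<le> (\<Sum>v=1..nV I. \<Sum>\<sigma>\<le>nT I. \<bar>J v \<sigma>\<bar>)" if "v \<in> {1..nV I}" for v y
    unfolding g_def using that
    by (intro order_trans[OF volunteer_value_abs_le] member_le_sum) (auto intro: sum_nonneg)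
  have g_response: "g v (b, False, z) = g v (b, True, z)" for v b z
    by (simp add: g_def)
  have "(\<lambda>\<omega>. state_value I J (Suc t) (next_activation I t a \<omega>)) = (\<lambda>\<omega>. \<Sum>v=1..nV I. g v (\<omega> v))"
    unfolding state_value_def next_activation_def g_def by (intro ext sum.cong) auto
  then have "measure_pmf.expectation (notify_pmf I xt s t)
      (\<lambda>\<omega>. state_value I J (Suc t) (next_activation I t a \<omega>)) =
      measure_pmf.expectation (notify_pmf I xt s t) (\<lambda>\<omega>. \<Sum>v=1..nV I. g v (\<omega> v))"
    by simp
  also have "\<dots> = (\<Sum>v=1..nV I. measure_pmf.expectation (vol_pmf I xt v s t) (g v))"
    unfolding notify_pmf_def by (rule expectation_sum_Pi_pmf_bounded) (use g_bound in auto)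
  also have "\<dots> = (\<Sum>v=1..nV I. continuation_value I xt J v s t a)"
  proof (rule sum.cong[OF refl])
    fix v
    assume v: "v \<in> {1..nV I}"
    have "measure_pmf.expectation (vol_pmf I xt v s t) (g v) =
        xt v s t * measure_pmf.expectation (gZ I) (\<lambda>z. g v (True, True, z))
        + (1 - xt v s t) * measure_pmf.expectation (gZ I) (\<lambda>z. g v (False, True, z))"
      using SN_xt_bounds[OF v s t] pm_bounds[OF valid v s]
      by (subst expectation_vol_pmf[OF g_bound[OF v]]) (simp_all add: g_response algebra_simps)
    then show
      "measure_pmf.expectation (vol_pmf I xt v s t) (g v) = continuation_value I xt J v s t a"
      using expectation_reactivation[OF valid, of t J v] t
      by (cases "a v \<le> t") (simp_all add: continuation_value_def g_def max_def algebra_simps)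
  qed
  finally show ?thesis .
qed

lemma volunteer_value_unfold:
  assumes v: "v \<in> {1..nV I}" and t: "t \<in> {1..nT I}"
  shows "volunteer_value I J v (max t (a v)) =
    lam0 I t * volunteer_value I J v (max (Suc t) (a v)) +
    (\<Sum>s=1..nS I.
      lam I s t * (notification_credit xt r v s t a + continuation_value I xt J v s t a))"
proof (cases "a v \<le> t")
  case True
  have "t + 1 \<le> nT I \<or> t = nT I"
    using t by auto
  then have "volunteer_value I J v (Suc t) = J v (t + 1)"
    using SN_J_horizon[OF v] by (auto simp: volunteer_value_def)
  then show ?thesis
    using SN_J[OF v t] True t
    by (simp add: notification_credit_def continuation_value_def volunteer_value_def max_def
        algebra_simps)
next
  case False
  then have "volunteer_value I J v (max t (a v)) =
      (lam0 I t + (\<Sum>s=1..nS I. lam I s t)) * volunteer_value I J v (a v)"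
    by (simp add: lam0_def)
  with False show ?thesis
    by (simp add: notification_credit_def continuation_value_def max_def distrib_right
        sum_distrib_right)
qed

lemma state_value_unfold:
  assumes t: "t \<in> {1..nT I}"
  shows "state_value I J t a = lam0 I t * state_value I J (Suc t) a +
    (\<Sum>s=1..nS I. lam I s t * ((\<Sum>v=1..nV I. notification_credit xt r v s t a) +
      (\<Sum>v=1..nV I. continuation_value I xt J v s t a)))"
proof -
  have "state_value I J t a = lam0 I t * state_value I J (Suc t) a +
      (\<Sum>v=1..nV I. \<Sum>s=1..nS I.
        lam I s t * (notification_credit xt r v s t a + continuation_value I xt J v s t a))"
    unfolding state_value_def
    by (simp add: volunteer_value_unfold[OF _ t] sum.distrib sum_distrib_left)
  then show ?thesis
    by (subst (asm) sum.swap) (simp add: sum_distrib_left sum.distrib[symmetric])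
qed

lemma expected_step_ge:
  assumes s: "s \<in> {1..nS I}" and t: "t \<in> {1..nT I}"
    and le: "\<And>b. state_value I J (Suc t) b \<le> P b" and bounded: "\<And>b. \<bar>P b\<bar> \<le> B"
  shows "(\<Sum>v=1..nV I. notification_credit xt r v s t a) +
    (\<Sum>v=1..nV I. continuation_value I xt J v s t a) \<le> measure_pmf.expectation (notify_pmf I xt s t)
        (\<lambda>\<omega>. of_bool (task_completed I t a \<omega>) + P (next_activation I t a \<omega>))"
proof -
  let ?E = "measure_pmf.expectation (notify_pmf I xt s t)"
  let ?C = "\<lambda>\<omega>. of_bool (task_completed I t a \<omega>) :: real"
  let ?V = "\<lambda>\<omega>. state_value I J (Suc t) (next_activation I t a \<omega>)"
  have C: "integrable (notify_pmf I xt s t) ?C"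
    by (rule integrable_measure_pmf_bounded[where B = 1]) simp
  have V: "integrable (notify_pmf I xt s t) ?V"
    by (rule integrable_measure_pmf_bounded, rule state_value_abs_le)
  have P: "integrable (notify_pmf I xt s t) (\<lambda>\<omega>. P (next_activation I t a \<omega>))"
    by (rule integrable_measure_pmf_bounded, rule bounded)
  have "?E ?C + ?E ?V = ?E (\<lambda>\<omega>. ?C \<omega> + ?V \<omega>)"
    by (rule Bochner_Integration.integral_add[symmetric, OF C V])
  also have "\<dots> \<le> ?E (\<lambda>\<omega>. ?C \<omega> + P (next_activation I t a \<omega>))"
    using le by (intro integral_mono Bochner_Integration.integrable_add C V P) auto
  finally show ?thesis
    using expected_completion_ge[OF s t, of a] expected_next_state_value[OF s t, of a] by simp
qed

lemma polval_ge_state_value: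
  "1 \<le> t \<Longrightarrow> t + n = nT I + 1 \<Longrightarrow> state_value I J t a \<le> polval I xt n t a"
proof (induction n arbitrary: t a)
  case 0
  then show ?case
    by (simp add: state_value_def volunteer_value_def)
next
  case (Suc n)
  then have t: "t \<in> {1..nT I}"
    by auto
  have IH: "state_value I J (Suc t) b \<le> polval I xt n (Suc t) b" for b
    using Suc by simp
  have bounded: "\<bar>polval I xt n (Suc t) b\<bar> \<le> n" for b
    using polval_bounds[OF valid, of "Suc t" n xt b] Suc.prems by auto
  have "state_value I J t a \<le> lam0 I t * polval I xt n (Suc t) a +
      (\<Sum>s=1..nS I. lam I s t * measure_pmf.expectation (notify_pmf I xt s t)
        (\<lambda>\<omega>. of_bool (task_completed I t a \<omega>) + polval I xt n (Suc t) (next_activation I t a \<omega>)))"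
    unfolding state_value_unfold[OF t]
    using IH expected_step_ge[OF _ t IH bounded] lam0_nonneg[OF valid t] lam_nonneg[OF valid _ t]
    by (intro add_mono mult_left_mono sum_mono) auto
  then show ?case
    unfolding polval_Suc_eq .
qed

lemma POL_SN_ge_sum_J: "(\<Sum>v=1..nV I. J v 1) \<le> POL_SN I xt"
proof -
  have "volunteer_value I J v 1 = J v 1" if "v \<in> {1..nV I}" for v
    using SN_J_horizon[OF that] by (cases "nT I") (auto simp: volunteer_value_def)
  then have "state_value I J 1 (\<lambda>v. 0) = (\<Sum>v=1..nV I. J v 1)"
    by (simp add: state_value_def)
  then show ?thesis
    using polval_ge_state_value[of 1 "nT I" "\<lambda>v. 0"] by (simp add: POL_SN_def)
qed

end

theorem theorem1:
  fixes I :: inst and q :: real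
    and xLP xAA xSQ xs xt r :: sol and J :: "nat \<Rightarrow> nat \<Rightarrow> real"
    and m :: nat and xseq yseq :: "nat \<Rightarrow> sol"
  assumes "valid_inst I"
    and "is_mdhr I q"
    and "LP_opt I xLP"
    and "AA_output I m xseq yseq xAA"
    and "SQ_output I xSQ"
    and "xstar_choice I xLP xAA xSQ xs"
    and "SN_arrays I xs xt r J"
  shows "POL_SN I xt \<ge> (1 / (2 - q)) * (1 - exp (-1)) * LPval I"
proof -
  note valid = assms(1) and mdhr = assms(2)
  have xLP: "inP I xLP"
    using assms(3) by (simp add: LP_opt_def)
  have "inP I xs"
    using assms(6) xLP AA_output_inP[OF assms(4)] SQ_output_inP[OF assms(5)]
    by (auto simp: xstar_choice_def)
  then interpret SN_setting I xs xt r J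
    using valid assms(7) by unfold_locales
  have q: "0 < 2 - q"
    using mdhr_le_1[OF mdhr] by simp
  have "(1 - exp (-1)) * LPval I \<le> fexa I xLP"
    using LPobj_le_fexa[OF valid xLP] LPval_eq_LPobj[OF assms(3)] by simp
  also have "\<dots> \<le> fexa I xs"
    using assms(6) by (simp add: xstar_choice_def)
  also have "\<dots> \<le> (\<Sum>v=1..nV I. \<Sum>t=1..nT I. \<Sum>s=1..nS I. lam I s t * xs v s t * r v s t)"
    by (rule fexa_le_volunteer_rewards)
  also have "\<dots> \<le> (\<Sum>v=1..nV I. (2 - q) * J v 1)"
    by (rule sum_mono) (rule volunteer_reward_le[OF mdhr])
  also have "\<dots> \<le> (2 - q) * POL_SN I xt"
    using POL_SN_ge_sum_J q by (simp add: sum_distrib_left[symmetric])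
  finally show ?thesis
    using q by (simp add: field_simps)
qed

end
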